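(* Let $\mathcal{Y}\in\mathbb{Z}^{n_1\times\cdots\times n_d}$ be a sample from $\operatorname{TBM}(\rho,\mathcal{S},z_1,\dots,z_d)$ whose entries are sub-Poisson with dispersion parameter $\rho$. Let $1\le d'<d$ and define the aggregate tensor $\mathcal{Y}'\in\mathbb{Z}^{n_1\times\cdots\times n_{d'}}$ by $\mathcal{Y}'_{i_1\dots i_{d'}} = \sum_{i_{d'+1},\dots,i_d}\mathcal{Y}_{i_1\dots i_d}$. Then $\mathcal{Y}'$ is a sample from $\operatorname{TBM}(\rho',\mathcal{S}',z_1,\dots,z_{d'})$ with density $\rho' = n_{d'+1}\cdots n_d\,\rho$ and core tensor $$\mathcal{S}'_{j_1\dots j_{d'}} = \frac{1}{n_{d'+1}\cdots n_d}\sum_{i_{d'+1},\dots,i_d}\mathcal{S}_{j_1\dots j_{d'} z_{d'+1}(i_{d'+1})\dots z_d(i_d)},$$ and the entries of $\mathcal{Y}'$ are sub-Poisson with dispersion parameter $\rho'$.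
   Context: Tensor block model: $\operatorname{TBM}(\rho,\mathcal{S},z_1,\dots,z_d)$ with dimensions $n_1,\dots,n_d$ and cluster counts $r_1,\dots,r_d$ is the law of a random tensor $\mathcal{Y}\in\mathbb{Z}^{n_1\times\cdots\times n_d}$ with independent entries and $\mathbb{E}\mathcal{Y}_{i_1\dots i_d} = \rho\,\mathcal{S}_{z_1(i_1)\dots z_d(i_d)}$, where $\rho\ge 0$, $\mathcal{S}\in[-1,1]^{r_1\times\cdots\times r_d}$, and $z_j\in[r_j]^{n_j}$ (here $[r]=\{1,\dots,r\}$). Sub-Poisson: a real integrable random variable $X$ is sub-Poisson with dispersion parameter $\rho$ if $\mathbb{E}e^{\lambda(X-\mathbb{E}X)} \le \exp\{\rho(e^{|\lambda|}-1-|\lambda|)\}$ for all $\lambda\in\mathbb{R}$ and $\mathbb{E}|X-\mathbb{E}X|\le\rho$. *)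

theory Defs
  imports "HOL-Probability.Probability"
begin

text \<open>Tensor indices are lists of 0-based positions: an index of an order-d tensor with
  dimensions n 0, ..., n (d-1) is a list of length d whose k-th entry is < n k.  Cluster labels are 0-based: z k i < r k.\<close>

definition idxs :: "(nat \<Rightarrow> nat) \<Rightarrow> nat \<Rightarrow> nat list set" where
  "idxs n d = {xs. length xs = d \<and> (\<forall>k<d. xs ! k < n k)}"

definition zlab :: "(nat \<Rightarrow> nat \<Rightarrow> nat) \<Rightarrow> nat list \<Rightarrow> nat list" where
  "zlab z i = map (\<lambda>k. z k (i ! k)) [0..<length i]"

definition TBM :: "'a measure \<Rightarrow> nat \<Rightarrow> (nat \<Rightarrow> nat) \<Rightarrow> (nat \<Rightarrow> nat) \<Rightarrow> real
    \<Rightarrow> (nat list \<Rightarrow> real) \<Rightarrow> (nat \<Rightarrow> nat \<Rightarrow> nat) \<Rightarrow> ('a \<Rightarrow> nat list \<Rightarrow> int) \<Rightarrow> bool" where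
  "TBM M d n r \<rho> S z Y \<longleftrightarrow>
     0 \<le> \<rho> \<and>
     (\<forall>j\<in>idxs r d. S j \<in> {-1..1}) \<and>
     (\<forall>k<d. \<forall>i<n k. z k i < r k) \<and>
     prob_space.indep_vars M (\<lambda>_. count_space UNIV) (\<lambda>i x. Y x i) (idxs n d) \<and>
     (\<forall>i\<in>idxs n d. integrable M (\<lambda>x. real_of_int (Y x i)) \<and>
        (\<integral>x. real_of_int (Y x i) \<partial>M) = \<rho> * S (zlab z i))"

definition sub_Poisson :: "'a measure \<Rightarrow> ('a \<Rightarrow> real) \<Rightarrow> real \<Rightarrow> bool" where
  "sub_Poisson M X \<rho> \<longleftrightarrow>
     integrable M X \<and>
     (\<forall>l::real. (\<integral>\<^sup>+x. ennreal (exp (l * (X x - (\<integral>y. X y \<partial>M)))) \<partial>M)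
                  \<le> ennreal (exp (\<rho> * (exp \<bar>l\<bar> - 1 - \<bar>l\<bar>)))) \<and>
     (\<integral>x. \<bar>X x - (\<integral>y. X y \<partial>M)\<bar> \<partial>M) \<le> \<rho>"

end

theory Submission
  imports Defs
begin

text \<open>Summing over the trailing d - d' coordinates groups the entries of Y into the disjoint
  blocks {i @ t | t}, each of size N = n d' \<cdot> ... \<cdot> n (d - 1).  Sums over disjoint blocks of
  independent variables are again independent, and by linearity the mean of a block sum is
  \<rho> times the sum of the core entries it meets, i.e. N \<rho> times their average S'.  For the
  sub-Poisson property, the centred moment generating function of a sum of independent variables
  is the product of the individual ones, so the exponents \<rho> (exp |\<lambda>| - 1 - |\<lambda>|) add up to
  N \<rho> (exp |\<lambda>| - 1 - |\<lambda>|); the bound on the mean absolute deviation is the triangle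
  inequality.\<close>

lemma idxs_0: "idxs n 0 = {[]}"
  by (auto simp: idxs_def)

lemma idxs_Suc: "idxs n (Suc d) = (\<lambda>(xs, a). xs @ [a]) ` (idxs n d \<times> {..<n d})"
proof (intro set_eqI iffI)
  fix ys assume ys: "ys \<in> idxs n (Suc d)"
  obtain xs a where ys_eq: "ys = xs @ [a]"
    using ys by (cases ys rule: rev_cases) (auto simp: idxs_def)
  have len: "length xs = d" and bound: "\<And>k. k < Suc d \<Longrightarrow> (xs @ [a]) ! k < n k"
    using ys unfolding ys_eq idxs_def by simp_all
  have "xs ! k < n k" if "k < d" for k
    using len bound[of k] that by (simp add: nth_append)
  then have "xs \<in> idxs n d"
    using len by (simp add: idxs_def)
  moreover have "a < n d"
    using len bound[of d] by (simp add: nth_append)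
  ultimately show "ys \<in> (\<lambda>(xs, a). xs @ [a]) ` (idxs n d \<times> {..<n d})"
    using ys_eq by auto
qed (auto simp: idxs_def nth_append less_Suc_eq)

lemma finite_idxs: "finite (idxs n d)"
  by (induction d) (simp_all add: idxs_0 idxs_Suc)

lemma card_idxs: "card (idxs n d) = (\<Prod>k<d. n k)"
proof (induction d)
  case (Suc d)
  have "inj_on (\<lambda>(xs, a). xs @ [a]) (idxs n d \<times> {..<n d})"
    by (auto simp: inj_on_def)
  then show ?case
    by (simp add: idxs_Suc card_image card_cartesian_product finite_idxs Suc.IH)
qed (simp add: idxs_0)

lemma card_idxs_shift: "card (idxs (\<lambda>k. n (d + k)) e) = (\<Prod>k\<in>{d..<d + e}. n k)"
  using prod.shift_bounds_nat_ivl[of n 0 d e]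
  by (simp add: card_idxs lessThan_atLeast0 add.commute)

lemma idxs_nonempty:
  assumes "\<forall>k<d. 0 < n k"
  shows "idxs n d \<noteq> {}"
proof -
  have "0 < card (idxs n d)"
    using assms by (simp add: card_idxs prod_pos)
  then show ?thesis
    by auto
qed

lemma append_in_idxs:
  assumes "i \<in> idxs n d" "t \<in> idxs (\<lambda>k. n (d + k)) e"
  shows "i @ t \<in> idxs n (d + e)"
proof -
  have "(i @ t) ! k < n k" if "k < d + e" for k
  proof (cases "k < d")
    case False
    define m where "m = k - d"
    have "k = d + m" "m < e"
      using False that unfolding m_def by simp_all
    then show ?thesis using assms by (simp add: idxs_def nth_append)
  qed (use assms in \<open>simp add: idxs_def nth_append\<close>)
  then show ?thesis using assms by (simp add: idxs_def)
qed

lemma zlab_append: "zlab z (i @ t) = zlab z i @ map (\<lambda>k. z (length i + k) (t ! k)) [0..<length t]"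
  unfolding zlab_def by (rule nth_equalityI) (auto simp: nth_append)

lemma disjoint_family_on_append_idxs: "disjoint_family_on (\<lambda>i. (@) i ` T) (idxs n d)"
  unfolding disjoint_family_on_def
proof (intro ballI impI)
  fix i i' assume "i \<in> idxs n d" "i' \<in> idxs n d" "i \<noteq> i'"
  then have "length i = length i'" "i \<noteq> i'"
    by (simp_all add: idxs_def)
  then show "(@) i ` T \<inter> (@) i' ` T = {}"
    by auto
qed

lemma average_in_unit_interval:
  fixes f :: "'b \<Rightarrow> real"
  assumes "finite T" "T \<noteq> {}" "\<And>t. t \<in> T \<Longrightarrow> f t \<in> {-1..1}"
  shows "1 / real (card T) * (\<Sum>t\<in>T. f t) \<in> {-1..1}"
proof -
  have "\<bar>\<Sum>t\<in>T. f t\<bar> \<le> (\<Sum>t\<in>T. 1)"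
    using assms(3) by (intro order_trans[OF sum_abs] sum_mono) (simp add: abs_le_iff)
  moreover have "0 < real (card T)"
    using assms by (simp add: card_gt_0_iff)
  ultimately show ?thesis
    by (auto simp: abs_le_iff field_simps)
qed

lemma aggregate_core_in_unit_interval:
  assumes S: "\<forall>j\<in>idxs r (d + e). S j \<in> {-1..1}" and z: "\<forall>k<d + e. \<forall>i<n k. z k i < r k"
    and n: "\<forall>k<d + e. 0 < n k" and j: "j \<in> idxs r d"
  shows "1 / real (card (idxs (\<lambda>k. n (d + k)) e))
    * (\<Sum>t\<in>idxs (\<lambda>k. n (d + k)) e. S (j @ map (\<lambda>k. z (d + k) (t ! k)) [0..<e])) \<in> {-1..1}"
proof (rule average_in_unit_interval)
  show "idxs (\<lambda>k. n (d + k)) e \<noteq> {}"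
    using n by (intro idxs_nonempty) simp
  fix t assume "t \<in> idxs (\<lambda>k. n (d + k)) e"
  then have "map (\<lambda>k. z (d + k) (t ! k)) [0..<e] \<in> idxs (\<lambda>k. r (d + k)) e"
    using z by (auto simp: idxs_def)
  then show "S (j @ map (\<lambda>k. z (d + k) (t ! k)) [0..<e]) \<in> {-1..1}"
    using S append_in_idxs[OF j] by blast
qed (rule finite_idxs)

lemma measurable_sum_count_space:
  fixes f :: "'i \<Rightarrow> 'a \<Rightarrow> 'b::{countable, comm_monoid_add}"
  assumes "finite A" "\<And>j. j \<in> A \<Longrightarrow> f j \<in> M \<rightarrow>\<^sub>M count_space UNIV"
  shows "(\<lambda>\<omega>. \<Sum>j\<in>A. f j \<omega>) \<in> M \<rightarrow>\<^sub>M count_space UNIV"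
  using assms
proof (induction A rule: finite_induct)
  case (insert a A)
  then have [measurable]: "f a \<in> M \<rightarrow>\<^sub>M count_space UNIV"
    "(\<lambda>\<omega>. \<Sum>j\<in>A. f j \<omega>) \<in> M \<rightarrow>\<^sub>M count_space UNIV" by auto
  show ?case using insert.hyps by simp measurable
qed simp

lemma (in prob_space) indep_vars_block_sums:
  fixes X :: "'i \<Rightarrow> 'a \<Rightarrow> 'b::{countable, comm_monoid_add}"
  assumes ind: "indep_vars (\<lambda>_. count_space UNIV) X I"
    and blocks: "\<And>k. k \<in> K \<Longrightarrow> J k \<subseteq> I" "\<And>k. k \<in> K \<Longrightarrow> finite (J k)"
    and disj: "disjoint_family_on J K"
  shows "indep_vars (\<lambda>_. count_space UNIV) (\<lambda>k \<omega>. \<Sum>j\<in>J k. X j \<omega>) K"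
proof -
  have sum_measurable:
    "(\<lambda>x. \<Sum>j\<in>J k. x j :: 'b) \<in> PiM (J k) (\<lambda>_. count_space UNIV) \<rightarrow>\<^sub>M count_space UNIV"
    if "k \<in> K" for k
    using blocks(2)[OF that] by (rule measurable_sum_count_space) simp
  have "indep_vars (\<lambda>_. count_space UNIV)
      (\<lambda>k \<omega>. (\<lambda>x. \<Sum>j\<in>J k. x j) (restrict (\<lambda>j. X j \<omega>) (J k))) K"
    by (rule indep_vars_compose2[OF indep_vars_restrict[OF ind blocks(1) disj] sum_measurable])
  then show ?thesis by simp
qed

lemma (in prob_space) indep_vars_aggregate:
  fixes Y :: "'a \<Rightarrow> nat list \<Rightarrow> 'b::{countable, comm_monoid_add}"
  assumes "indep_vars (\<lambda>_. count_space UNIV) (\<lambda>i x. Y x i) (idxs n (d + e))"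
  shows "indep_vars (\<lambda>_. count_space UNIV)
    (\<lambda>i x. \<Sum>t\<in>idxs (\<lambda>k. n (d + k)) e. Y x (i @ t)) (idxs n d)"
proof -
  let ?T = "idxs (\<lambda>k. n (d + k)) e"
  have "indep_vars (\<lambda>_. count_space UNIV) (\<lambda>i x. \<Sum>j\<in>(@) i ` ?T. Y x j) (idxs n d)"
    using assms append_in_idxs finite_idxs disjoint_family_on_append_idxs
    by (intro indep_vars_block_sums) auto
  then show ?thesis
    by (simp add: sum.reindex inj_on_def)
qed

lemma aggregate_expectation:
  assumes moments: "\<forall>i\<in>idxs n (d + e). integrable M (\<lambda>x. real_of_int (Y x i))
      \<and> (\<integral>x. real_of_int (Y x i) \<partial>M) = \<rho> * S (zlab z i)"
    and i: "i \<in> idxs n d"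
  shows "integrable M (\<lambda>x. real_of_int (\<Sum>t\<in>idxs (\<lambda>k. n (d + k)) e. Y x (i @ t)))"
    and "(\<integral>x. real_of_int (\<Sum>t\<in>idxs (\<lambda>k. n (d + k)) e. Y x (i @ t)) \<partial>M)
      = \<rho> * (\<Sum>t\<in>idxs (\<lambda>k. n (d + k)) e. S (zlab z i @ map (\<lambda>k. z (d + k) (t ! k)) [0..<e]))"
proof -
  let ?T = "idxs (\<lambda>k. n (d + k)) e"
  have block_moments: "integrable M (\<lambda>x. real_of_int (Y x (i @ t)))"
    "(\<integral>x. real_of_int (Y x (i @ t)) \<partial>M) = \<rho> * S (zlab z i @ map (\<lambda>k. z (d + k) (t ! k)) [0..<e])"
    if "t \<in> ?T" for t
    using moments append_in_idxs[OF i that] i that by (auto simp: zlab_append idxs_def)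
  show "integrable M (\<lambda>x. real_of_int (\<Sum>t\<in>?T. Y x (i @ t)))"
    unfolding of_int_sum using block_moments(1) by (rule Bochner_Integration.integrable_sum)
  have "(\<integral>x. real_of_int (\<Sum>t\<in>?T. Y x (i @ t)) \<partial>M)
      = (\<Sum>t\<in>?T. \<integral>x. real_of_int (Y x (i @ t)) \<partial>M)"
    unfolding of_int_sum using block_moments(1) by (rule Bochner_Integration.integral_sum)
  also have "\<dots> = (\<Sum>t\<in>?T. \<rho> * S (zlab z i @ map (\<lambda>k. z (d + k) (t ! k)) [0..<e]))"
    using block_moments(2) by (rule sum.cong[OF refl])
  finally show "(\<integral>x. real_of_int (\<Sum>t\<in>?T. Y x (i @ t)) \<partial>M)
      = \<rho> * (\<Sum>t\<in>?T. S (zlab z i @ map (\<lambda>k. z (d + k) (t ! k)) [0..<e]))"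
    unfolding sum_distrib_left .
qed

lemma (in prob_space)
  assumes "sub_Poisson M X \<rho>"
  shows sub_Poisson_integrable_exp: "integrable M (\<lambda>x. exp (l * (X x - expectation X)))"
    and sub_Poisson_expectation_exp_le:
      "expectation (\<lambda>x. exp (l * (X x - expectation X))) \<le> exp (\<rho> * (exp \<bar>l\<bar> - 1 - \<bar>l\<bar>))"
proof -
  have nn_le: "(\<integral>\<^sup>+x. ennreal (exp (l * (X x - expectation X))) \<partial>M)
      \<le> ennreal (exp (\<rho> * (exp \<bar>l\<bar> - 1 - \<bar>l\<bar>)))"
    using assms unfolding sub_Poisson_def by blast
  have [measurable]: "X \<in> borel_measurable M"
    using assms unfolding sub_Poisson_def by auto
  show int: "integrable M (\<lambda>x. exp (l * (X x - expectation X)))"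
    by (rule integrableI_nonneg) (use nn_le in \<open>auto simp: top.not_eq_extremum le_less_trans\<close>)
  show "expectation (\<lambda>x. exp (l * (X x - expectation X))) \<le> exp (\<rho> * (exp \<bar>l\<bar> - 1 - \<bar>l\<bar>))"
    using nn_le by (simp add: nn_integral_eq_integral[OF int])
qed

lemma (in prob_space) sub_Poisson_sum:
  fixes X :: "'i \<Rightarrow> 'a \<Rightarrow> real"
  assumes fin: "finite J" and ind: "indep_vars (\<lambda>_. borel) X J"
    and sp: "\<And>j. j \<in> J \<Longrightarrow> sub_Poisson M (X j) (\<rho> j)"
  shows "sub_Poisson M (\<lambda>x. \<Sum>j\<in>J. X j x) (\<Sum>j\<in>J. \<rho> j)"
proof -
  have int: "\<And>j. j \<in> J \<Longrightarrow> integrable M (X j)"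
    using sp by (simp add: sub_Poisson_def)
  have mean: "expectation (\<lambda>x. \<Sum>j\<in>J. X j x) = (\<Sum>j\<in>J. expectation (X j))"
    using int by (simp add: Bochner_Integration.integral_sum)
  have mgf: "(\<integral>\<^sup>+x. ennreal (exp (l * ((\<Sum>j\<in>J. X j x) - (\<Sum>j\<in>J. expectation (X j))))) \<partial>M)
      \<le> ennreal (exp ((\<Sum>j\<in>J. \<rho> j) * (exp \<bar>l\<bar> - 1 - \<bar>l\<bar>)))" for l
  proof -
    define c where "c = exp \<bar>l\<bar> - 1 - \<bar>l\<bar>"
    define g where "g j x = exp (l * (X j x - expectation (X j)))" for j x
    have g_int: "integrable M (g j)" and g_le: "expectation (g j) \<le> exp (\<rho> j * c)"
      if "j \<in> J" for j
      using sub_Poisson_integrable_exp[OF sp[OF that]] sub_Poisson_expectation_exp_le[OF sp[OF that]]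
      unfolding g_def c_def by auto
    have g_ind: "indep_vars (\<lambda>_. borel) g J"
      using indep_vars_compose2[OF ind, of "\<lambda>j v. exp (l * (v - expectation (X j)))"]
      unfolding g_def by simp
    have "(\<integral>\<^sup>+x. ennreal (exp (l * ((\<Sum>j\<in>J. X j x) - (\<Sum>j\<in>J. expectation (X j))))) \<partial>M)
        = (\<integral>\<^sup>+x. ennreal (\<Prod>j\<in>J. g j x) \<partial>M)"
      using fin by (simp add: g_def exp_sum sum_subtractf[symmetric] sum_distrib_left)
    also have "\<dots> = ennreal (expectation (\<lambda>x. \<Prod>j\<in>J. g j x))"
      by (rule nn_integral_eq_integral[OF indep_vars_integrable[OF fin g_ind g_int]])
         (auto simp: g_def intro!: AE_I2 prod_nonneg)
    also have "\<dots> = ennreal (\<Prod>j\<in>J. expectation (g j))"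
      by (simp add: indep_vars_lebesgue_integral[OF fin g_ind g_int])
    also have "\<dots> \<le> ennreal (\<Prod>j\<in>J. exp (\<rho> j * c))"
      by (intro ennreal_leI prod_mono conjI g_le integral_nonneg_AE) (simp_all add: g_def)
    also have "\<dots> = ennreal (exp ((\<Sum>j\<in>J. \<rho> j) * c))"
      using fin by (simp add: exp_sum sum_distrib_right)
    finally show ?thesis unfolding c_def .
  qed
  have dev: "expectation (\<lambda>x. \<bar>(\<Sum>j\<in>J. X j x) - (\<Sum>j\<in>J. expectation (X j))\<bar>)
      \<le> (\<Sum>j\<in>J. \<rho> j)"
  proof -
    have "expectation (\<lambda>x. \<bar>(\<Sum>j\<in>J. X j x) - (\<Sum>j\<in>J. expectation (X j))\<bar>)
        \<le> expectation (\<lambda>x. \<Sum>j\<in>J. \<bar>X j x - expectation (X j)\<bar>)"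
      using int by (intro integral_mono) (auto simp: sum_subtractf[symmetric])
    also have "\<dots> = (\<Sum>j\<in>J. expectation (\<lambda>x. \<bar>X j x - expectation (X j)\<bar>))"
      using int by (simp add: Bochner_Integration.integral_sum)
    also have "\<dots> \<le> (\<Sum>j\<in>J. \<rho> j)"
      using sp by (intro sum_mono) (simp add: sub_Poisson_def)
    finally show ?thesis .
  qed
  show ?thesis
    unfolding sub_Poisson_def mean using int mgf dev by auto
qed

lemma (in prob_space) sub_Poisson_aggregate:
  assumes ind: "indep_vars (\<lambda>_. count_space UNIV) (\<lambda>i x. Y x i) (idxs n (d + e))"
    and sp: "\<forall>i\<in>idxs n (d + e). sub_Poisson M (\<lambda>x. real_of_int (Y x i)) \<rho>"
    and i: "i \<in> idxs n d"
  shows "sub_Poisson M (\<lambda>x. real_of_int (\<Sum>t\<in>idxs (\<lambda>k. n (d + k)) e. Y x (i @ t)))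
    (real (card (idxs (\<lambda>k. n (d + k)) e)) * \<rho>)"
proof -
  let ?J = "(@) i ` idxs (\<lambda>k. n (d + k)) e"
  have J: "?J \<subseteq> idxs n (d + e)"
    using append_in_idxs[OF i] by auto
  have "indep_vars (\<lambda>_. borel) (\<lambda>j x. real_of_int (Y x j)) ?J"
    using indep_vars_compose2[OF indep_vars_subset[OF ind J], of "\<lambda>_. real_of_int"] by simp
  then have "sub_Poisson M (\<lambda>x. \<Sum>j\<in>?J. real_of_int (Y x j)) (\<Sum>j\<in>?J. \<rho>)"
    using sp J finite_idxs by (intro sub_Poisson_sum) auto
  then show ?thesis
    by (simp add: sum.reindex card_image inj_on_def)
qed

theorem theorem3p2:
  fixes M :: "'a measure" and d d' :: nat and n r :: "nat \<Rightarrow> nat" and \<rho> :: real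
    and S :: "nat list \<Rightarrow> real" and z :: "nat \<Rightarrow> nat \<Rightarrow> nat"
    and Y :: "'a \<Rightarrow> nat list \<Rightarrow> int"
  assumes "prob_space M"
    and "\<forall>k<d. 0 < n k"
    and "1 \<le> d'" and "d' < d"
    and "TBM M d n r \<rho> S z Y"
    and "\<forall>i\<in>idxs n d. sub_Poisson M (\<lambda>x. real_of_int (Y x i)) \<rho>"
  shows "let N = (\<Prod>k\<in>{d'..<d}. n k);
             T = idxs (\<lambda>k. n (d' + k)) (d - d');
             Y' = (\<lambda>x i. \<Sum>t\<in>T. Y x (i @ t));
             S' = (\<lambda>j. (1 / real N) *
                    (\<Sum>t\<in>T. S (j @ map (\<lambda>k. z (d' + k) (t ! k)) [0..<d - d'])))
         in TBM M d' n r (real N * \<rho>) S' z Y'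
            \<and> (\<forall>i\<in>idxs n d'. sub_Poisson M (\<lambda>x. real_of_int (Y' x i)) (real N * \<rho>))"
proof -
  interpret prob_space M by fact
  obtain e where d: "d = d' + e"
    using \<open>d' < d\<close> less_imp_add_positive by blast
  let ?T = "idxs (\<lambda>k. n (d' + k)) e"
  have "0 \<le> \<rho>" and S: "\<forall>j\<in>idxs r (d' + e). S j \<in> {-1..1}"
    and z: "\<forall>k<d' + e. \<forall>i<n k. z k i < r k"
    and ind: "indep_vars (\<lambda>_. count_space UNIV) (\<lambda>i x. Y x i) (idxs n (d' + e))"
    and moments: "\<forall>i\<in>idxs n (d' + e). integrable M (\<lambda>x. real_of_int (Y x i))
      \<and> (\<integral>x. real_of_int (Y x i) \<partial>M) = \<rho> * S (zlab z i)"
    using \<open>TBM M d n r \<rho> S z Y\<close> unfolding TBM_def d by auto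
  have "card ?T \<noteq> 0"
    using idxs_nonempty[of e] finite_idxs \<open>\<forall>k<d. 0 < n k\<close> unfolding d by simp
  then show ?thesis
    unfolding Let_def TBM_def d diff_add_inverse card_idxs_shift[symmetric]
    using \<open>0 \<le> \<rho>\<close> z aggregate_core_in_unit_interval[OF S z \<open>\<forall>k<d. 0 < n k\<close>[unfolded d]]
      indep_vars_aggregate[OF ind] aggregate_expectation[OF moments]
      sub_Poisson_aggregate[OF ind \<open>\<forall>i\<in>idxs n d. sub_Poisson M _ \<rho>\<close>[unfolded d]]
    by auto
qed

end
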